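(* Assume (A1)–(A4) below and $a>0$. Let $u_0\in H^2(\mathbb{R}_+)$ with $u_0(0)=u_0'(0)=0$, extended by zero to $\mathbb{R}^-$. For $\Delta t\in(0,1]$ define $$u^{\rm app}_{j,n}=\frac1{\Delta x}\int_{x_j}^{x_{j+1}}u_0(y-a\,t^n)\,dy,\quad j,n\ge0,$$ $$\varepsilon_{j,n+k}=\frac1{\Delta t}\Big(\sum_{\sigma=0}^k\alpha_\sigma u^{\rm app}_{j,n+\sigma}+\lambda\sum_{\sigma=0}^{k-1}\beta_\sigma\sum_{\ell=-r}^pa_\ell u^{\rm app}_{j+\ell,n+\sigma}\Big),\quad j\ge r,\ n\ge0,$$ $$\eta_{j,n}=u^{\rm app}_{j,n},\quad 0\le j\le r-1,\ n\ge k.$$ Then there exists $C>0$, independent of $u_0$ and $\Delta t\in(0,1]$, such that $$\sup_{n\ge k}\sum_{j\ge r}\Delta x|\varepsilon_{j,n}|^2\le C\,\Delta t^2\|u_0''\|^2_{L^2(\mathbb{R}^+)}$$ and $$\sum_{n\ge k}\sum_{j=0}^{r-1}\Delta t|\eta_{j,n}|^2\le C\,\Delta t^2\|u_0'\|^2_{L^2(\mathbb{R}^+)}.$$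
   Context: Fix the following data: - a real number $a\neq0$; - nonnegative integers $p,r$ and real coefficients $a_{-r},\dots,a_p$ with $a_{-r}\neq0$ and $a_p\neq0$; - an integer $k\ge1$ and real coefficients $\alpha_0,\dots,\alpha_k$, $\beta_0,\dots,\beta_{k-1}$ with $\alpha_k=1$ and $|\alpha_0|+|\beta_0|>0$; - a fixed ratio $\lambda>0$. For $\Delta t\in(0,1]$ set $\Delta x=\Delta t/\lambda$, $x_j=j\Delta x$ and $t^n=n\Delta t$. Let $\mathcal A(z)=\sum_{\ell=-r}^p a_\ell z^\ell$ for $z\in\mathbb{C}\setminus\{0\}$. Assumptions: (A1) $\sum_{\ell=-r}^p a_\ell=0$ and $\sum_{\ell=-r}^p\ell a_\ell=a$. (A2) $\sum_{\sigma=0}^k\alpha_\sigma=0$ and $\sum_{\sigma=0}^k\sigma\alpha_\sigma=\sum_{\sigma=0}^{k-1}\beta_\sigma$. (A3) There is $C>0$ such that for all $\Delta t\in(0,1]$, every solution $(u_j^n)_{j\in\mathbb{Z},n\in\mathbb{N}}$ of $\sum_{\sigma=0}^k\alpha_\sigma u_j^{n+\sigma}+\lambda\sum_{\sigma=0}^{k-1}\beta_\sigma\sum_{\ell=-r}^pa_\ell u_{j+\ell}^{n+\sigma}=0$ ($j\in\mathbb{Z}$, $n\in\mathbb{N}$) satisfies $\sup_{n}\sum_{j\in\mathbb{Z}}\Delta x|u_j^n|^2\le C\sum_{\sigma=0}^{k-1}\sum_{j\in\mathbb{Z}}\Delta x|u_j^\sigma|^2$. (A4) $\mathcal A(e^{i\theta})\neq0$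 for all $\theta\in[-\pi,\pi]\setminus\{0\}$. *)

theory Defs
  imports "HOL-Analysis.Analysis"
begin

definition symbolA :: "nat \<Rightarrow> nat \<Rightarrow> (int \<Rightarrow> real) \<Rightarrow> complex \<Rightarrow> complex" where
  "symbolA r p ac z = (\<Sum>l\<in>{-int r..int p}. complex_of_real (ac l) * z powi l)"

definition scheme_op ::
  "nat \<Rightarrow> nat \<Rightarrow> (int \<Rightarrow> real) \<Rightarrow> nat \<Rightarrow> (nat \<Rightarrow> real) \<Rightarrow> (nat \<Rightarrow> real) \<Rightarrow> real
   \<Rightarrow> (int \<Rightarrow> nat \<Rightarrow> real) \<Rightarrow> int \<Rightarrow> nat \<Rightarrow> real" where
  "scheme_op r p ac k alpha beta lam u j n =
     (\<Sum>\<sigma>\<in>{0..k}. alpha \<sigma> * u j (n + \<sigma>))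
     + lam * (\<Sum>\<sigma><k. beta \<sigma> * (\<Sum>l\<in>{-int r..int p}. ac l * u (j + l) (n + \<sigma>)))"

text \<open>(A3): uniform l^2 stability of the scheme on the whole line, for all dt in (0,1],
  with dx = dt / lambda. Sums are taken in ennreal (so that infinite l^2 norms are allowed).\<close>
definition l2_stable ::
  "nat \<Rightarrow> nat \<Rightarrow> (int \<Rightarrow> real) \<Rightarrow> nat \<Rightarrow> (nat \<Rightarrow> real) \<Rightarrow> (nat \<Rightarrow> real) \<Rightarrow> real \<Rightarrow> bool" where
  "l2_stable r p ac k alpha beta lam \<longleftrightarrow>
     (\<exists>C>0. \<forall>dt. 0 < dt \<and> dt \<le> 1 \<longrightarrow>
        (\<forall>u :: int \<Rightarrow> nat \<Rightarrow> real.
           (\<forall>j n. scheme_op r p ac k alpha beta lam u j n = 0) \<longrightarrow>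
           (SUP n. (\<Sum>\<^sub>\<infinity> j. ennreal (dt / lam * (u j n)\<^sup>2)))
             \<le> ennreal C * (\<Sum>\<sigma><k. (\<Sum>\<^sub>\<infinity> j. ennreal (dt / lam * (u j \<sigma>)\<^sup>2)))))"

definition L2_half :: "(real \<Rightarrow> real) \<Rightarrow> bool" where
  "L2_half f \<longleftrightarrow> f \<in> borel_measurable lborel \<and>
     (\<integral>\<^sup>+ x\<in>{0..}. ennreal ((f x)\<^sup>2) \<partial>lborel) < \<infinity>"

text \<open>u0 in H^2(R_+) with u0(0) = u0'(0) = 0, with (weak) derivatives u1 = u0', u2 = u0'',
  using the absolutely continuous representatives; u0 is extended by zero to the negative axis.\<close>
definition H2_zero :: "(real \<Rightarrow> real) \<Rightarrow> (real \<Rightarrow> real) \<Rightarrow> (real \<Rightarrow> real) \<Rightarrow> bool" where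
  "H2_zero u0 u1 u2 \<longleftrightarrow> L2_half u0 \<and> L2_half u1 \<and> L2_half u2 \<and>
     (\<forall>x\<ge>0. u0 x = (LBINT y:{0..x}. u1 y)) \<and>
     (\<forall>x\<ge>0. u1 x = (LBINT y:{0..x}. u2 y)) \<and>
     (\<forall>x<0. u0 x = 0)"

definition L2_norm_sq :: "(real \<Rightarrow> real) \<Rightarrow> ennreal" where
  "L2_norm_sq f = (\<integral>\<^sup>+ x\<in>{0..}. ennreal ((f x)\<^sup>2) \<partial>lborel)"

definition uapp :: "real \<Rightarrow> real \<Rightarrow> (real \<Rightarrow> real) \<Rightarrow> real \<Rightarrow> int \<Rightarrow> nat \<Rightarrow> real" where
  "uapp a lam u0 dt j n =
     (let dx = dt / lam in
      (1 / dx) * (LBINT y:{real_of_int j * dx .. real_of_int (j + 1) * dx}. u0 (y - a * (real n * dt))))"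

text \<open>Consistency error: eps_{j,m} for m \<ge> k, i.e. eps_{j,n+k} with n = m - k.\<close>
definition eps_err ::
  "real \<Rightarrow> nat \<Rightarrow> nat \<Rightarrow> (int \<Rightarrow> real) \<Rightarrow> nat \<Rightarrow> (nat \<Rightarrow> real) \<Rightarrow> (nat \<Rightarrow> real) \<Rightarrow> real
   \<Rightarrow> (real \<Rightarrow> real) \<Rightarrow> real \<Rightarrow> int \<Rightarrow> nat \<Rightarrow> real" where
  "eps_err a r p ac k alpha beta lam u0 dt j m =
     (1 / dt) * scheme_op r p ac k alpha beta lam (uapp a lam u0 dt) j (m - k)"

end

theory Submission
  imports Defs
begin

(* Since the exact solution is a translate of u0, the cell average u^app_{j,n} is the average
   of u0 over the cell x_j - a t^n + [0, dx].  Conditions (A1) and (A2) say exactly that the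
   scheme annihilates grid functions that are affine in x_j - a t^n.  So the scheme applied to
   u^app only sees the first order Taylor remainders of the cell averages around the cell of
   (j, n); these are bounded by dt times the L^1 norm of u0'' on a window of length O(dt).
   Cauchy-Schwarz turns this into dt^(3/2) times a local L^2 norm, and the windows of different
   j overlap a bounded number of times, which gives the first estimate.  For the second, u0
   vanishes on the negative axis and is transported to the right with speed a > 0, so the
   boundary cells j < r carry no mass once a t^n >= r dx, i.e. after O(1) time steps; before
   that, |u0| <= int_0^(r dx) |u0'| <= (r dx)^(1/2) ||u0'||.  Neither estimate needs the
   stability hypotheses (A3), (A4) or the normalisations of the coefficients. *)

definition ac_deriv :: "(real \<Rightarrow> real) \<Rightarrow> (real \<Rightarrow> real) \<Rightarrow> bool" where
  "ac_deriv U V \<longleftrightarrow> (\<forall>a b. set_integrable lborel {a..b} V) \<and>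
     (\<forall>a b. a \<le> b \<longrightarrow> U b - U a = (LBINT y:{a..b}. V y))"

lemma set_integrable_Icc_of_square_integrable:
  fixes g :: "real \<Rightarrow> real"
  assumes [measurable]: "g \<in> borel_measurable lborel"
    and fin: "(\<integral>\<^sup>+x. ennreal ((g x)\<^sup>2) \<partial>lborel) < \<infinity>"
  shows "set_integrable lborel {a..b} g"
proof -
  have "(\<integral>\<^sup>+x. ennreal (norm (indicator {a..b} x *\<^sub>R g x)) \<partial>lborel)
      \<le> (\<integral>\<^sup>+x. indicator {a..b} x + ennreal ((g x)\<^sup>2) \<partial>lborel)"
  proof (rule nn_integral_mono)
    fix x
    have "\<bar>g x\<bar> \<le> 1 + (g x)\<^sup>2"
    proof (cases "\<bar>g x\<bar> \<le> 1")
      case True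
      then show ?thesis using zero_le_power2[of "g x"] by linarith
    next
      case False
      then have "\<bar>g x\<bar> * 1 \<le> \<bar>g x\<bar> * \<bar>g x\<bar>" by (intro mult_left_mono) auto
      then show ?thesis by (simp add: power2_eq_square abs_mult_self_eq)
    qed
    then have "ennreal \<bar>g x\<bar> \<le> ennreal (1 + (g x)\<^sup>2)" by (rule ennreal_leI)
    also have "\<dots> = 1 + ennreal ((g x)\<^sup>2)" by (subst ennreal_plus) auto
    finally have "ennreal \<bar>g x\<bar> \<le> 1 + ennreal ((g x)\<^sup>2)" .
    then show "ennreal (norm (indicator {a..b} x *\<^sub>R g x)) \<le> indicator {a..b} x + ennreal ((g x)\<^sup>2)"
      by (auto simp: indicator_def)
  qed
  also have "\<dots> = emeasure lborel {a..b} + (\<integral>\<^sup>+x. ennreal ((g x)\<^sup>2) \<partial>lborel)"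
    by (subst nn_integral_add) auto
  also have "\<dots> < \<infinity>"
    using fin by (cases "a \<le> b") (auto simp: less_top)
  finally show ?thesis
    unfolding set_integrable_def by (subst integrable_iff_bounded) auto
qed

lemma ennreal_abs_set_integral_le:
  fixes f :: "real \<Rightarrow> real"
  assumes "set_integrable lborel A f"
  shows "ennreal \<bar>LBINT x:A. f x\<bar> \<le> (\<integral>\<^sup>+x\<in>A. ennreal \<bar>f x\<bar> \<partial>lborel)"
proof -
  have "ennreal (norm (LBINT x:A. f x)) \<le> (\<integral>\<^sup>+x. ennreal (norm (indicator A x *\<^sub>R f x)) \<partial>lborel)"
    using integral_norm_bound_ennreal[of lborel "\<lambda>x. indicator A x *\<^sub>R f x"] assms
    unfolding set_integrable_def set_lebesgue_integral_def by simp
  also have "\<dots> = (\<integral>\<^sup>+x\<in>A. ennreal \<bar>f x\<bar> \<partial>lborel)"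
    by (rule nn_integral_cong) (auto simp: indicator_def)
  finally show ?thesis by simp
qed

lemma set_nn_integral_abs_neq_top:
  fixes f :: "real \<Rightarrow> real"
  assumes "set_integrable lborel A f"
  shows "(\<integral>\<^sup>+x\<in>A. ennreal \<bar>f x\<bar> \<partial>lborel) \<noteq> \<infinity>"
proof -
  have "(\<integral>\<^sup>+x. ennreal (norm (indicator A x *\<^sub>R f x)) \<partial>lborel) < \<infinity>"
    using assms unfolding set_integrable_def integrable_iff_bounded by simp
  also have "(\<integral>\<^sup>+x. ennreal (norm (indicator A x *\<^sub>R f x)) \<partial>lborel) = (\<integral>\<^sup>+x\<in>A. ennreal \<bar>f x\<bar> \<partial>lborel)"
    by (rule nn_integral_cong) (auto simp: indicator_def)
  finally show ?thesis by simp
qed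

lemma Cauchy_Schwarz_nn_integral_Icc:
  fixes f :: "real \<Rightarrow> real"
  assumes [measurable]: "f \<in> borel_measurable borel" and "a \<le> b"
  shows "(\<integral>\<^sup>+x\<in>{a..b}. ennreal \<bar>f x\<bar> \<partial>lborel)\<^sup>2
    \<le> ennreal (b - a) * (\<integral>\<^sup>+x\<in>{a..b}. ennreal ((f x)\<^sup>2) \<partial>lborel)"
proof -
  have "(\<integral>\<^sup>+x. (ennreal \<bar>f x\<bar> * indicator {a..b} x) * indicator {a..b} x \<partial>lborel)\<^sup>2
     \<le> (\<integral>\<^sup>+x. (ennreal \<bar>f x\<bar> * indicator {a..b} x) ^ 2 \<partial>lborel)
       * (\<integral>\<^sup>+x. (indicator {a..b} x :: ennreal) ^ 2 \<partial>lborel)"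
    by (rule Cauchy_Schwarz_nn_integral) auto
  moreover have "(\<lambda>x. (ennreal \<bar>f x\<bar> * indicator {a..b} x) * indicator {a..b} x)
      = (\<lambda>x. ennreal \<bar>f x\<bar> * indicator {a..b} x)"
    by (auto simp: indicator_def)
  moreover have "(\<lambda>x. (ennreal \<bar>f x\<bar> * indicator {a..b} x) ^ 2)
      = (\<lambda>x. ennreal ((f x)\<^sup>2) * indicator {a..b} x)"
    by (auto simp: indicator_def ennreal_power power2_abs)
  moreover have "(\<lambda>x. (indicator {a..b} x :: ennreal) ^ 2) = indicator {a..b}"
    by (auto simp: indicator_def)
  ultimately show ?thesis
    using assms(2) by (simp add: mult.commute)
qed

lemma set_integral_Icc_translate:
  fixes f :: "real \<Rightarrow> real"
  shows "(LBINT y:{c..c+d}. f y) = (LBINT t:{0..d}. f (c + t))"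
proof -
  have "(LBINT y:{c..c+d}. f y) = \<bar>1\<bar> *\<^sub>R (\<integral>t. indicator {c..c+d} (c + 1 * t) *\<^sub>R f (c + 1 * t) \<partial>lborel)"
    unfolding set_lebesgue_integral_def by (rule lborel_integral_real_affine) simp
  also have "\<dots> = (\<integral>t. indicator {0..d} t *\<^sub>R f (c + t) \<partial>lborel)"
    by (auto intro!: Bochner_Integration.integral_cong simp: indicator_def)
  finally show ?thesis by (simp add: set_lebesgue_integral_def)
qed

lemma set_integrable_Icc_translate:
  fixes f :: "real \<Rightarrow> real"
  assumes "set_integrable lborel {c..c+d} f"
  shows "set_integrable lborel {0..d} (\<lambda>t. f (c + t))"
proof -
  have "integrable lborel (\<lambda>t. indicator {c..c+d} (c + 1 * t) *\<^sub>R f (c + 1 * t))"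
    using assms unfolding set_integrable_def by (intro lborel_integrable_real_affine) auto
  also have "(\<lambda>t. indicator {c..c+d} (c + 1 * t) *\<^sub>R f (c + 1 * t)) = (\<lambda>t. indicator {0..d} t *\<^sub>R f (c + t))"
    by (auto simp: indicator_def)
  finally show ?thesis unfolding set_integrable_def .
qed

lemma set_integrable_const_Icc: "set_integrable lborel {a..b::real} (\<lambda>_. c::real)"
  unfolding set_integrable_def
  by (cases "a \<le> b") (auto intro!: integrable_scaleR_left simp: integrable_indicator_iff less_top[symmetric])

lemma ac_derivI_zero_extension:
  fixes f F :: "real \<Rightarrow> real"
  assumes loc: "\<And>a b. set_integrable lborel {a..b} f"
    and f_neg: "\<And>y. y < 0 \<Longrightarrow> f y = 0"
    and F_pos: "\<And>x. x \<ge> 0 \<Longrightarrow> F x = (LBINT y:{0..x}. f y)"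
    and F_neg: "\<And>x. x < 0 \<Longrightarrow> F x = 0"
  shows "ac_deriv F f"
proof -
  have interval_integrable: "interval_lebesgue_integrable lborel (ereal c) (ereal d) f" for c d
  proof (cases "c \<le> d")
    case True
    then show ?thesis unfolding interval_lebesgue_integrable_def
      by (auto intro: set_integrable_subset[OF loc[of c d]])
  next
    case False
    then show ?thesis unfolding interval_lebesgue_integrable_def
      by (auto intro: set_integrable_subset[OF loc[of d c]])
  qed
  have F_eq: "F x = (LBINT y=ereal s..ereal x. f y)" if "s \<le> x" "s \<le> 0" for s x
  proof -
    have vanish: "(LBINT y=ereal c..ereal d. f y) = 0" if "c \<le> d" "d \<le> 0" for c d
    proof -
      have "(LBINT y:{c<..<d}. f y) = (LBINT y:{c<..<d}. 0)"
        by (rule set_lebesgue_integral_cong) (use that f_neg in auto)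
      then show ?thesis using that by (simp add: interval_lebesgue_integral_def)
    qed
    show ?thesis
    proof (cases "x \<ge> 0")
      case True
      have "(LBINT y=ereal s..ereal x. f y) = (LBINT y=ereal s..ereal 0. f y) + (LBINT y=ereal 0..ereal x. f y)"
        by (rule interval_integral_sum[symmetric]) (simp add: interval_integrable min_def max_def)
      also have "\<dots> = (LBINT y:{0..x}. f y)"
        using True that vanish[of s 0] by (simp add: interval_integral_Icc)
      finally show ?thesis using F_pos[OF True] by simp
    qed (use that vanish F_neg[of x] in simp)
  qed
  have "F b - F a = (LBINT y:{a..b}. f y)" if "a \<le> b" for a b
  proof -
    have "(LBINT y=ereal (min a 0)..ereal a. f y) + (LBINT y=ereal a..ereal b. f y)
        = (LBINT y=ereal (min a 0)..ereal b. f y)"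
      by (rule interval_integral_sum) (simp add: interval_integrable min_def max_def)
    then show ?thesis
      using that F_eq[of "min a 0" a] F_eq[of "min a 0" b] by (simp add: interval_integral_Icc)
  qed
  with loc show ?thesis unfolding ac_deriv_def by blast
qed

lemma ac_derivD:
  assumes "ac_deriv U V"
  shows "set_integrable lborel {a..b} V"
    and "a \<le> b \<Longrightarrow> U b - U a = (LBINT y:{a..b}. V y)"
  using assms unfolding ac_deriv_def by auto

lemma ac_deriv_abs_diff_le:
  assumes V: "ac_deriv V W" and "\<bar>y - w\<bar> \<le> R"
  shows "ennreal \<bar>V y - V w\<bar> \<le> (\<integral>\<^sup>+x\<in>{w-R..w+R}. ennreal \<bar>W x\<bar> \<partial>lborel)"
proof -
  define lo hi where "lo = min y w" and "hi = max y w"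
  have "\<bar>V y - V w\<bar> = \<bar>V hi - V lo\<bar>"
    by (auto simp: lo_def hi_def min_def max_def abs_minus_commute)
  also have "\<dots> = \<bar>LBINT x:{lo..hi}. W x\<bar>"
    using ac_derivD(2)[OF V, of lo hi] by (simp add: lo_def hi_def)
  finally have "ennreal \<bar>V y - V w\<bar> \<le> (\<integral>\<^sup>+x\<in>{lo..hi}. ennreal \<bar>W x\<bar> \<partial>lborel)"
    using ennreal_abs_set_integral_le[OF ac_derivD(1)[OF V]] by simp
  also have "\<dots> \<le> (\<integral>\<^sup>+x\<in>{w-R..w+R}. ennreal \<bar>W x\<bar> \<partial>lborel)"
    using assms(2) by (intro nn_integral_mono) (auto simp: indicator_def lo_def hi_def)
  finally show ?thesis .
qed

lemma set_integrable_Icc_of_ac_deriv: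
  assumes [measurable]: "U \<in> borel_measurable borel" and U: "ac_deriv U V"
  shows "set_integrable lborel {a..b} U"
  unfolding set_integrable_def
proof (rule integrableI_bounded_set_indicator[where B = "\<bar>U a\<bar> + (LBINT y:{a..b}. \<bar>V y\<bar>)"])
  show "AE x in lborel. x \<in> {a..b} \<longrightarrow> norm (U x) \<le> \<bar>U a\<bar> + (LBINT y:{a..b}. \<bar>V y\<bar>)"
  proof (rule AE_I2, safe)
    fix t assume t: "t \<in> {a..b}"
    have "\<bar>U t - U a\<bar> = \<bar>LBINT y:{a..t}. V y\<bar>"
      using ac_derivD(2)[OF U, of a t] t by simp
    also have "\<dots> \<le> (LBINT y:{a..t}. \<bar>V y\<bar>)"
      using set_integral_norm_bound[OF ac_derivD(1)[OF U]] by simp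
    also have "\<dots> \<le> (LBINT y:{a..b}. \<bar>V y\<bar>)"
      unfolding set_lebesgue_integral_def
      using set_integrable_abs[OF ac_derivD(1)[OF U, of a t]] set_integrable_abs[OF ac_derivD(1)[OF U, of a b]] t
      by (intro integral_mono) (auto simp: set_integrable_def indicator_def)
    finally show "norm (U t) \<le> \<bar>U a\<bar> + (LBINT y:{a..b}. \<bar>V y\<bar>)" by simp
  qed
  show "emeasure lborel {a..b} < \<infinity>"
    by (cases "a \<le> b") auto
qed auto

lemma ac_deriv_taylor_remainder_le:
  assumes U: "ac_deriv U V" and V: "ac_deriv V W"
  shows "ennreal \<bar>U (w + h) - U w - h * V w\<bar>
    \<le> ennreal \<bar>h\<bar> * (\<integral>\<^sup>+x\<in>{w-\<bar>h\<bar>..w+\<bar>h\<bar>}. ennreal \<bar>W x\<bar> \<partial>lborel)"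
proof -
  define G where "G = (\<integral>\<^sup>+x\<in>{w-\<bar>h\<bar>..w+\<bar>h\<bar>}. ennreal \<bar>W x\<bar> \<partial>lborel)"
  define lo hi where "lo = min w (w + h)" and "hi = max w (w + h)"
  have lohi: "lo \<le> hi" "hi - lo = \<bar>h\<bar>" by (auto simp: lo_def hi_def)
  have int: "set_integrable lborel {lo..hi} (\<lambda>y. V y - V w)"
    by (intro set_integral_diff(1) ac_derivD(1)[OF U] set_integrable_const_Icc)
  have "(LBINT y:{lo..hi}. V y - V w) = (LBINT y:{lo..hi}. V y) - (LBINT y:{lo..hi}. V w)"
    by (intro set_integral_diff(2) ac_derivD(1)[OF U] set_integrable_const_Icc)
  also have "\<dots> = (U hi - U lo) - (hi - lo) * V w"
    using ac_derivD(2)[OF U lohi(1)] lohi by (simp add: set_integral_const)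
  finally have "\<bar>U (w + h) - U w - h * V w\<bar> = \<bar>LBINT y:{lo..hi}. V y - V w\<bar>"
    by (cases "h \<ge> 0") (auto simp: lo_def hi_def abs_minus_commute[of "U w"] algebra_simps)
  then have "ennreal \<bar>U (w + h) - U w - h * V w\<bar> \<le> (\<integral>\<^sup>+y\<in>{lo..hi}. ennreal \<bar>V y - V w\<bar> \<partial>lborel)"
    using ennreal_abs_set_integral_le[OF int] by simp
  also have "\<dots> \<le> (\<integral>\<^sup>+y. G * indicator {lo..hi} y \<partial>lborel)"
  proof (rule nn_integral_mono)
    fix y
    have "ennreal \<bar>V y - V w\<bar> \<le> G" if "y \<in> {lo..hi}"
      using ac_deriv_abs_diff_le[OF V, of y w "\<bar>h\<bar>"] that by (auto simp: G_def lo_def hi_def)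
    then show "ennreal \<bar>V y - V w\<bar> * indicator {lo..hi} y \<le> G * indicator {lo..hi} y"
      by (auto simp: indicator_def)
  qed
  also have "\<dots> = G * ennreal \<bar>h\<bar>"
    using lohi by (simp add: nn_integral_cmult_indicator)
  finally show ?thesis by (simp add: G_def mult.commute)
qed

lemma cell_average_taylor_remainder_le:
  assumes [measurable]: "U \<in> borel_measurable borel"
    and U: "ac_deriv U V" and V: "ac_deriv V W" and "0 \<le> d"
  shows "ennreal \<bar>(LBINT t:{0..d}. U (w + t + h)) - (LBINT t:{0..d}. U (w + t)) - h * (LBINT t:{0..d}. V (w + t))\<bar>
     \<le> ennreal d * ennreal \<bar>h\<bar> * (\<integral>\<^sup>+x\<in>{w-\<bar>h\<bar>..w+d+\<bar>h\<bar>}. ennreal \<bar>W x\<bar> \<partial>lborel)"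
proof -
  define G where "G = (\<integral>\<^sup>+x\<in>{w-\<bar>h\<bar>..w+d+\<bar>h\<bar>}. ennreal \<bar>W x\<bar> \<partial>lborel)"
  define R where "R t = U (w + t + h) - U (w + t) - h * V (w + t)" for t
  have "set_integrable lborel {0..d} (\<lambda>t. U (c + t))" for c
    by (intro set_integrable_Icc_translate set_integrable_Icc_of_ac_deriv[OF _ U]) simp
  from this[of "w + h"] this[of w]
  have i1: "set_integrable lborel {0..d} (\<lambda>t. U (w + t + h))"
    and i2: "set_integrable lborel {0..d} (\<lambda>t. U (w + t))"
    by (simp_all add: ac_simps)
  have i3: "set_integrable lborel {0..d} (\<lambda>t. h * V (w + t))"
    using set_integrable_Icc_translate[OF ac_derivD(1)[OF U]] by simp
  have "(LBINT t:{0..d}. U (w + t + h)) - (LBINT t:{0..d}. U (w + t)) - h * (LBINT t:{0..d}. V (w + t))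
      = (LBINT t:{0..d}. R t)"
    using i1 i2 i3 by (simp add: R_def set_integral_diff)
  moreover have "set_integrable lborel {0..d} R"
    unfolding R_def using i1 i2 i3 by (intro set_integral_diff(1))
  ultimately have "ennreal \<bar>(LBINT t:{0..d}. U (w + t + h)) - (LBINT t:{0..d}. U (w + t)) - h * (LBINT t:{0..d}. V (w + t))\<bar>
      \<le> (\<integral>\<^sup>+t\<in>{0..d}. ennreal \<bar>R t\<bar> \<partial>lborel)"
    by (simp add: ennreal_abs_set_integral_le)
  also have "\<dots> \<le> (\<integral>\<^sup>+t. (ennreal \<bar>h\<bar> * G) * indicator {0..d} t \<partial>lborel)"
  proof (rule nn_integral_mono)
    fix t
    have "ennreal \<bar>R t\<bar> \<le> ennreal \<bar>h\<bar> * G" if "t \<in> {0..d}"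
    proof -
      have "ennreal \<bar>R t\<bar> \<le> ennreal \<bar>h\<bar> * (\<integral>\<^sup>+x\<in>{w+t-\<bar>h\<bar>..w+t+\<bar>h\<bar>}. ennreal \<bar>W x\<bar> \<partial>lborel)"
        using ac_deriv_taylor_remainder_le[OF U V, of "w + t" h] by (simp add: R_def)
      also have "\<dots> \<le> ennreal \<bar>h\<bar> * G"
        unfolding G_def using that by (intro mult_left_mono nn_integral_mono) (auto simp: indicator_def)
      finally show ?thesis .
    qed
    then show "ennreal \<bar>R t\<bar> * indicator {0..d} t \<le> (ennreal \<bar>h\<bar> * G) * indicator {0..d} t"
      by (auto simp: indicator_def)
  qed
  also have "\<dots> = ennreal \<bar>h\<bar> * G * ennreal d"
    using \<open>0 \<le> d\<close> by (simp add: nn_integral_cmult_indicator)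
  finally show ?thesis by (simp add: G_def mult_ac)
qed

lemma L2_half_zero_extension:
  assumes "L2_half f"
  defines "g \<equiv> \<lambda>x. if x < 0 then 0 else f x"
  shows "g \<in> borel_measurable borel"
    and "(\<integral>\<^sup>+x. ennreal ((g x)\<^sup>2) \<partial>lborel) = L2_norm_sq f"
    and "set_integrable lborel {a..b} g"
proof -
  have [measurable]: "f \<in> borel_measurable borel"
    using assms(1) unfolding L2_half_def by simp
  show g: "g \<in> borel_measurable borel" unfolding g_def by measurable
  show sq: "(\<integral>\<^sup>+x. ennreal ((g x)\<^sup>2) \<partial>lborel) = L2_norm_sq f"
    unfolding L2_norm_sq_def g_def by (rule nn_integral_cong) (auto simp: indicator_def)
  show "set_integrable lborel {a..b} g"
    using g assms(1) by (intro set_integrable_Icc_of_square_integrable)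
      (auto simp: sq L2_half_def L2_norm_sq_def)
qed

lemma H2_zero_ac_deriv_extension:
  assumes "H2_zero u0 u1 u2"
  obtains V W where "u0 \<in> borel_measurable borel" "V \<in> borel_measurable borel" "W \<in> borel_measurable borel"
    and "ac_deriv u0 V" "ac_deriv V W" "\<And>x. x \<le> 0 \<Longrightarrow> u0 x = 0"
    and "(\<integral>\<^sup>+x. ennreal ((V x)\<^sup>2) \<partial>lborel) = L2_norm_sq u1"
    and "(\<integral>\<^sup>+x. ennreal ((W x)\<^sup>2) \<partial>lborel) = L2_norm_sq u2"
proof
  from assms have L0: "L2_half u0" and L1: "L2_half u1" and L2: "L2_half u2"
    and u0_pos: "\<And>x. x \<ge> 0 \<Longrightarrow> u0 x = (LBINT y:{0..x}. u1 y)"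
    and u1_pos: "\<And>x. x \<ge> 0 \<Longrightarrow> u1 x = (LBINT y:{0..x}. u2 y)"
    and u0_neg: "\<And>x. x < 0 \<Longrightarrow> u0 x = 0"
    unfolding H2_zero_def by auto
  define V where "V x = (if x < 0 then 0 else u1 x)" for x :: real
  define W where "W x = (if x < 0 then 0 else u2 x)" for x :: real
  note V_ext = L2_half_zero_extension[OF L1, folded V_def]
  note W_ext = L2_half_zero_extension[OF L2, folded W_def]
  show "u0 \<in> borel_measurable borel" using L0 unfolding L2_half_def by simp
  show "V \<in> borel_measurable borel" "W \<in> borel_measurable borel"
    "(\<integral>\<^sup>+x. ennreal ((V x)\<^sup>2) \<partial>lborel) = L2_norm_sq u1"
    "(\<integral>\<^sup>+x. ennreal ((W x)\<^sup>2) \<partial>lborel) = L2_norm_sq u2"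
    using V_ext W_ext by auto
  show "ac_deriv u0 V"
  proof (rule ac_derivI_zero_extension[OF V_ext(3) _ _ u0_neg])
    show "u0 x = (LBINT y:{0..x}. V y)" if "x \<ge> 0" for x
      unfolding u0_pos[OF that] by (rule set_lebesgue_integral_cong) (auto simp: V_def)
  qed (simp add: V_def)
  show "ac_deriv V W"
  proof (rule ac_derivI_zero_extension[OF W_ext(3)])
    show "V x = (LBINT y:{0..x}. W y)" if "x \<ge> 0" for x
      unfolding V_def using that u1_pos[OF that]
      by (simp, intro set_lebesgue_integral_cong) (auto simp: W_def)
  qed (simp_all add: V_def W_def)
  show "u0 x = 0" if "x \<le> 0" for x
  proof (cases "x < 0")
    case False
    then have "x = 0" using that by simp
    moreover have "(LBINT y=ereal 0..ereal 0. u1 y) = (LBINT y:{0..0}. u1 y)"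
      by (rule interval_integral_Icc) simp
    ultimately show ?thesis
      using u0_pos[of 0] by (simp add: interval_lebesgue_integral_def set_lebesgue_integral_def)
  qed (rule u0_neg)
qed

definition scheme_coeff_norm ::
  "nat \<Rightarrow> nat \<Rightarrow> (int \<Rightarrow> real) \<Rightarrow> nat \<Rightarrow> (nat \<Rightarrow> real) \<Rightarrow> (nat \<Rightarrow> real) \<Rightarrow> real \<Rightarrow> real" where
  "scheme_coeff_norm r p ac k alpha beta lam =
     (\<Sum>\<sigma>\<in>{0..k}. \<bar>alpha \<sigma>\<bar>) + lam * (\<Sum>\<sigma><k. \<bar>beta \<sigma>\<bar> * (\<Sum>l\<in>{-int r..int p}. \<bar>ac l\<bar>))"

lemma scheme_coeff_norm_nonneg: "lam \<ge> 0 \<Longrightarrow> scheme_coeff_norm r p ac k alpha beta lam \<ge> 0"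
  unfolding scheme_coeff_norm_def by (intro add_nonneg_nonneg mult_nonneg_nonneg sum_nonneg) auto

lemma abs_scheme_op_le:
  assumes "lam \<ge> 0"
    and u: "\<And>l \<sigma>. l \<in> {-int r..int p} \<Longrightarrow> \<sigma> \<le> k \<Longrightarrow> \<bar>u (j + l) (n + \<sigma>)\<bar> \<le> X"
  shows "\<bar>scheme_op r p ac k alpha beta lam u j n\<bar> \<le> scheme_coeff_norm r p ac k alpha beta lam * X"
proof -
  have time: "\<bar>\<Sum>\<sigma>\<in>{0..k}. alpha \<sigma> * u j (n + \<sigma>)\<bar> \<le> (\<Sum>\<sigma>\<in>{0..k}. \<bar>alpha \<sigma>\<bar>) * X"
    unfolding sum_distrib_right
  proof (rule order_trans[OF sum_abs sum_mono])
    fix \<sigma> assume "\<sigma> \<in> {0..k}"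
    then have "\<bar>u j (n + \<sigma>)\<bar> \<le> X" using u[of 0 \<sigma>] by simp
    then show "\<bar>alpha \<sigma> * u j (n + \<sigma>)\<bar> \<le> \<bar>alpha \<sigma>\<bar> * X"
      by (simp add: abs_mult mult_left_mono)
  qed
  have space: "\<bar>\<Sum>l\<in>{-int r..int p}. ac l * u (j + l) (n + \<sigma>)\<bar> \<le> (\<Sum>l\<in>{-int r..int p}. \<bar>ac l\<bar>) * X"
    if "\<sigma> < k" for \<sigma>
    unfolding sum_distrib_right
  proof (rule order_trans[OF sum_abs sum_mono])
    fix l assume "l \<in> {-int r..int p}"
    then have "\<bar>u (j + l) (n + \<sigma>)\<bar> \<le> X" using u that by simp
    then show "\<bar>ac l * u (j + l) (n + \<sigma>)\<bar> \<le> \<bar>ac l\<bar> * X"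
      by (simp add: abs_mult mult_left_mono)
  qed
  have "\<bar>\<Sum>\<sigma><k. beta \<sigma> * (\<Sum>l\<in>{-int r..int p}. ac l * u (j + l) (n + \<sigma>))\<bar>
      \<le> (\<Sum>\<sigma><k. \<bar>beta \<sigma>\<bar> * (\<Sum>l\<in>{-int r..int p}. \<bar>ac l\<bar>)) * X"
    unfolding sum_distrib_right
  proof (rule order_trans[OF sum_abs sum_mono])
    fix \<sigma> assume "\<sigma> \<in> {..<k}"
    then show "\<bar>beta \<sigma> * (\<Sum>l\<in>{-int r..int p}. ac l * u (j + l) (n + \<sigma>))\<bar>
        \<le> \<bar>beta \<sigma>\<bar> * (\<Sum>l\<in>{-int r..int p}. \<bar>ac l\<bar>) * X"
      using space by (simp add: abs_mult mult_left_mono mult.assoc)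
  qed
  then have "\<bar>scheme_op r p ac k alpha beta lam u j n\<bar>
      \<le> (\<Sum>\<sigma>\<in>{0..k}. \<bar>alpha \<sigma>\<bar>) * X + lam * ((\<Sum>\<sigma><k. \<bar>beta \<sigma>\<bar> * (\<Sum>l\<in>{-int r..int p}. \<bar>ac l\<bar>)) * X)"
    unfolding scheme_op_def using time \<open>lam \<ge> 0\<close>
    by (intro order_trans[OF abs_triangle_ineq] add_mono) (auto simp: abs_mult intro: mult_left_mono)
  then show ?thesis
    unfolding scheme_coeff_norm_def by (simp add: algebra_simps)
qed

lemma scheme_op_diff:
  "scheme_op r p ac k alpha beta lam (\<lambda>j n. u j n - v j n) j n
     = scheme_op r p ac k alpha beta lam u j n - scheme_op r p ac k alpha beta lam v j n"
  unfolding scheme_op_def by (simp add: right_diff_distrib sum_subtractf)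

lemma scheme_op_affine_eq_0:
  assumes A1: "(\<Sum>l\<in>{-int r..int p}. ac l) = 0" "(\<Sum>l\<in>{-int r..int p}. real_of_int l * ac l) = a"
    and A2: "(\<Sum>\<sigma>\<in>{0..k}. alpha \<sigma>) = 0" "(\<Sum>\<sigma>\<in>{0..k}. real \<sigma> * alpha \<sigma>) = (\<Sum>\<sigma><k. beta \<sigma>)"
    and "lam * dx = dt"
  shows "scheme_op r p ac k alpha beta lam (\<lambda>j n. A + B * (of_int j * dx - a * (real n * dt))) j n = 0"
proof -
  define c where "c \<sigma> = A + B * (of_int j * dx - a * (real (n + \<sigma>) * dt))" for \<sigma>
  have time: "(\<Sum>\<sigma>\<in>{0..k}. alpha \<sigma> * c \<sigma>)
      = c 0 * (\<Sum>\<sigma>\<in>{0..k}. alpha \<sigma>) - B * a * dt * (\<Sum>\<sigma>\<in>{0..k}. real \<sigma> * alpha \<sigma>)"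
    by (simp add: c_def algebra_simps sum.distrib sum_distrib_left sum_subtractf)
  have space: "(\<Sum>l\<in>{-int r..int p}. ac l * (A + B * (of_int (j + l) * dx - a * (real (n + \<sigma>) * dt))))
      = c \<sigma> * (\<Sum>l\<in>{-int r..int p}. ac l) + B * dx * (\<Sum>l\<in>{-int r..int p}. real_of_int l * ac l)" for \<sigma>
  proof -
    have "(\<Sum>l\<in>{-int r..int p}. ac l * (A + B * (of_int (j + l) * dx - a * (real (n + \<sigma>) * dt))))
        = (\<Sum>l\<in>{-int r..int p}. c \<sigma> * ac l + B * dx * (real_of_int l * ac l))"
      by (intro sum.cong) (simp_all add: c_def algebra_simps)
    then show ?thesis by (simp add: sum.distrib sum_distrib_left)
  qed
  have "scheme_op r p ac k alpha beta lam (\<lambda>j n. A + B * (of_int j * dx - a * (real n * dt))) j n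
      = (\<Sum>\<sigma>\<in>{0..k}. alpha \<sigma> * c \<sigma>)
        + lam * (\<Sum>\<sigma><k. beta \<sigma> * (\<Sum>l\<in>{-int r..int p}. ac l * (A + B * (of_int (j + l) * dx - a * (real (n + \<sigma>) * dt)))))"
    by (simp add: scheme_op_def c_def)
  also have "\<dots> = - B * a * dt * (\<Sum>\<sigma><k. beta \<sigma>) + lam * (\<Sum>\<sigma><k. beta \<sigma> * (B * dx * a))"
    unfolding time space A1 A2 by simp
  also have "\<dots> = 0"
    unfolding \<open>lam * dx = dt\<close>[symmetric] by (simp add: sum_distrib_left sum_distrib_right algebra_simps)
  finally show ?thesis .
qed

lemma uapp_eq_cell_average:
  "uapp a lam u0 dt j n
     = (LBINT t:{0..dt/lam}. u0 (of_int j * (dt/lam) - a * (real n * dt) + t)) / (dt/lam)"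
proof -
  define x0 dx where "x0 = of_int j * (dt/lam)" and "dx = dt / lam"
  have "uapp a lam u0 dt j n = (LBINT y:{x0..x0+dx}. u0 (y - a * (real n * dt))) / dx"
    unfolding uapp_def Let_def x0_def dx_def by (simp add: algebra_simps)
  also have "\<dots> = (LBINT t:{0..dx}. u0 (x0 - a * (real n * dt) + t)) / dx"
    unfolding set_integral_Icc_translate by (simp add: algebra_simps)
  finally show ?thesis unfolding x0_def dx_def .
qed

lemma uapp_eq_0_of_vanishing:
  assumes "\<And>t. t \<in> {0..dt/lam} \<Longrightarrow> u0 (of_int j * (dt/lam) - a * (real n * dt) + t) = 0"
  shows "uapp a lam u0 dt j n = 0"
proof -
  have "(LBINT t:{0..dt/lam}. u0 (of_int j * (dt/lam) - a * (real n * dt) + t)) = (LBINT t:{0..dt/lam}. 0)"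
    using assms by (intro set_lebesgue_integral_cong) auto
  then show ?thesis unfolding uapp_eq_cell_average by simp
qed

lemma abs_uapp_le:
  assumes "lam > 0" "dt > 0"
    and int: "set_integrable lborel {0..dt/lam} (\<lambda>t. u0 (of_int j * (dt/lam) - a * (real n * dt) + t))"
    and bound: "\<And>t. t \<in> {0..dt/lam} \<Longrightarrow> \<bar>u0 (of_int j * (dt/lam) - a * (real n * dt) + t)\<bar> \<le> M"
  shows "\<bar>uapp a lam u0 dt j n\<bar> \<le> M"
proof -
  have dx: "dt / lam > 0" using assms by simp
  have "\<bar>LBINT t:{0..dt/lam}. u0 (of_int j * (dt/lam) - a * (real n * dt) + t)\<bar>
      \<le> (LBINT t:{0..dt/lam}. \<bar>u0 (of_int j * (dt/lam) - a * (real n * dt) + t)\<bar>)"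
    using set_integral_norm_bound[OF int] by simp
  also have "\<dots> \<le> (LBINT t:{0..dt/lam}. M)"
    using bound by (intro set_integral_mono set_integrable_abs int set_integrable_const_Icc)
  also have "\<dots> = M * (dt / lam)" using dx by (simp add: set_integral_const)
  finally have "\<bar>LBINT t:{0..dt/lam}. u0 (of_int j * (dt/lam) - a * (real n * dt) + t)\<bar> \<le> M * (dt / lam)" .
  moreover have "\<bar>x / d\<bar> \<le> M" if "d > 0" "\<bar>x\<bar> \<le> M * d" for x d :: real
    using that by (simp add: abs_divide pos_divide_le_eq)
  ultimately show ?thesis
    unfolding uapp_eq_cell_average using dx by blast
qed

lemma sum_indicator_grid_intervals_le:
  fixes F :: "int set" and x c dx L :: real
  assumes "finite F" and "dx > 0" and "L \<ge> 0"
  shows "(\<Sum>j\<in>F. (indicator {of_int j * dx - c .. of_int j * dx - c + L} x :: ennreal))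
           \<le> of_nat (nat \<lceil>L/dx\<rceil> + 1)"
proof -
  define s where "s = (x + c - L) / dx"
  define S where "S = {j::int. x \<in> {of_int j * dx - c .. of_int j * dx - c + L}}"
  have "(\<Sum>j\<in>F. (indicator {of_int j * dx - c .. of_int j * dx - c + L} x :: ennreal)) = of_nat (card (F \<inter> S))"
    using \<open>finite F\<close> by (simp add: S_def indicator_def sum.If_cases)
  also have "card (F \<inter> S) \<le> card {\<lceil>s\<rceil> .. \<lceil>s\<rceil> + \<lceil>L/dx\<rceil>}"
  proof (rule card_mono)
    show "F \<inter> S \<subseteq> {\<lceil>s\<rceil>..\<lceil>s\<rceil> + \<lceil>L/dx\<rceil>}"
    proof
      fix j assume "j \<in> F \<inter> S"
      then have j1: "of_int j * dx - c \<le> x" and j2: "x \<le> of_int j * dx - c + L"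
        by (auto simp: S_def)
      have "s \<le> of_int j" using j2 \<open>dx > 0\<close> by (simp add: s_def field_simps)
      moreover have "of_int j \<le> s + L / dx" using j1 \<open>dx > 0\<close> by (simp add: s_def field_simps)
      ultimately show "j \<in> {\<lceil>s\<rceil>..\<lceil>s\<rceil> + \<lceil>L/dx\<rceil>}"
        using le_of_int_ceiling[of s] le_of_int_ceiling[of "L/dx"] by (auto simp: ceiling_le_iff) linarith
    qed
  qed simp
  also have "\<dots> = nat \<lceil>L/dx\<rceil> + 1"
  proof -
    have "\<lceil>0::real\<rceil> \<le> \<lceil>L/dx\<rceil>" using \<open>L \<ge> 0\<close> \<open>dx > 0\<close> by (intro ceiling_mono) simp
    then show ?thesis by (simp add: nat_add_distrib)
  qed
  finally show ?thesis by (simp add: of_nat_mono)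
qed

lemma abs_stencil_shift_le:
  assumes "lam > 0" "dt > 0" "a \<ge> 0" and "l \<in> {-int r..int p}" "\<sigma> \<le> k"
  shows "\<bar>of_int l * (dt/lam) - a * real \<sigma> * dt\<bar> \<le> dt * ((real r + real p) / lam + a * real k)"
proof -
  have "\<bar>of_int l * (dt/lam) - a * real \<sigma> * dt\<bar> \<le> \<bar>of_int l\<bar> * (dt/lam) + a * real \<sigma> * dt"
    using assms(1-3) abs_triangle_ineq4[of "of_int l * (dt/lam)" "a * real \<sigma> * dt"] by (simp add: abs_mult)
  also have "\<dots> \<le> (real r + real p) * (dt/lam) + a * real k * dt"
    using assms by (intro add_mono mult_right_mono mult_left_mono) auto
  finally show ?thesis
    using assms(1) by (simp add: field_simps)
qed

lemma abs_uapp_sub_affine_le: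
  fixes V W :: "real \<Rightarrow> real"
  assumes "lam > 0" "dt > 0" and [measurable]: "u0 \<in> borel_measurable borel"
    and U: "ac_deriv u0 V" and V: "ac_deriv V W"
    and shift: "of_int j * (dt/lam) - a * (real n * dt) = w + h"
    and "g \<ge> 0" and G: "(\<integral>\<^sup>+x\<in>{w-\<bar>h\<bar>..w+dt/lam+\<bar>h\<bar>}. ennreal \<bar>W x\<bar> \<partial>lborel) \<le> ennreal g"
  shows "\<bar>uapp a lam u0 dt j n
      - ((LBINT t:{0..dt/lam}. u0 (w + t)) + h * (LBINT t:{0..dt/lam}. V (w + t))) / (dt/lam)\<bar>
    \<le> \<bar>h\<bar> * g"
proof -
  define dx where "dx = dt / lam"
  have dx: "dx > 0" using assms(1,2) by (simp add: dx_def)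
  define E where "E = (LBINT t:{0..dx}. u0 (w + t + h)) - (LBINT t:{0..dx}. u0 (w + t)) - h * (LBINT t:{0..dx}. V (w + t))"
  have "ennreal \<bar>E\<bar> \<le> ennreal dx * ennreal \<bar>h\<bar> * (\<integral>\<^sup>+x\<in>{w-\<bar>h\<bar>..w+dx+\<bar>h\<bar>}. ennreal \<bar>W x\<bar> \<partial>lborel)"
    unfolding E_def using cell_average_taylor_remainder_le[OF _ U V, of dx w h] dx by simp
  also have "\<dots> \<le> ennreal dx * ennreal \<bar>h\<bar> * ennreal g"
    using G by (intro mult_left_mono) (auto simp: dx_def)
  also have "\<dots> = ennreal (dx * \<bar>h\<bar> * g)"
    using dx \<open>g \<ge> 0\<close> by (simp add: ennreal_mult)
  finally have "\<bar>E\<bar> \<le> dx * \<bar>h\<bar> * g"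
    using dx \<open>g \<ge> 0\<close> by (simp add: ennreal_le_iff)
  moreover have "uapp a lam u0 dt j n = (LBINT t:{0..dx}. u0 (w + t + h)) / dx"
    using uapp_eq_cell_average[of a lam u0 dt j n] unfolding shift by (simp add: dx_def add_ac)
  then have "uapp a lam u0 dt j n
      - ((LBINT t:{0..dx}. u0 (w + t)) + h * (LBINT t:{0..dx}. V (w + t))) / dx = E / dx"
    unfolding E_def by (simp add: diff_divide_distrib add_divide_distrib)
  ultimately show ?thesis
    using dx by (simp add: dx_def[symmetric] abs_divide divide_le_eq mult_ac)
qed

lemma abs_eps_err_le:
  fixes V W :: "real \<Rightarrow> real" and j :: int and m :: nat
  assumes "lam > 0" "dt > 0" "a \<ge> 0"
    and A1: "(\<Sum>l\<in>{-int r..int p}. ac l) = 0" "(\<Sum>l\<in>{-int r..int p}. real_of_int l * ac l) = a"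
    and A2: "(\<Sum>\<sigma>\<in>{0..k}. alpha \<sigma>) = 0" "(\<Sum>\<sigma>\<in>{0..k}. real \<sigma> * alpha \<sigma>) = (\<Sum>\<sigma><k. beta \<sigma>)"
    and [measurable]: "u0 \<in> borel_measurable borel" and U: "ac_deriv u0 V" and V: "ac_deriv V W"
  defines "T \<equiv> (real r + real p) / lam + a * real k"
    and "w \<equiv> of_int j * (dt/lam) - a * (real (m - k) * dt)"
  shows "ennreal \<bar>eps_err a r p ac k alpha beta lam u0 dt j m\<bar>
    \<le> ennreal (scheme_coeff_norm r p ac k alpha beta lam * T)
      * (\<integral>\<^sup>+x\<in>{w - dt*T .. w + dt/lam + dt*T}. ennreal \<bar>W x\<bar> \<partial>lborel)"
proof -
  define n dx S where "n = m - k" and "dx = dt / lam" and "S = scheme_coeff_norm r p ac k alpha beta lam"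
  have dx: "dx > 0" and dt_eq: "lam * dx = dt" using assms(1,2) by (auto simp: dx_def)
  have T: "T \<ge> 0" and S: "S \<ge> 0"
    using assms(1,3) by (simp_all add: T_def S_def scheme_coeff_norm_nonneg)
  define G where "G = (\<integral>\<^sup>+x\<in>{w - dt*T .. w + dx + dt*T}. ennreal \<bar>W x\<bar> \<partial>lborel)"
  define g where "g = enn2real G"
  have G_eq: "G = ennreal g" and g: "g \<ge> 0"
    using set_nn_integral_abs_neq_top[OF ac_derivD(1)[OF V]] by (auto simp: G_def g_def ennreal_enn2real_if)
  define A0 B0 where "A0 = (LBINT t:{0..dx}. u0 (w + t))" and "B0 = (LBINT t:{0..dx}. V (w + t))"
  \<comment> \<open>first order Taylor expansion of the cell averages around the cell of (j, n)\<close>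
  define v where "v j' n' = (A0 + (of_int j' * dx - a * (real n' * dt) - w) * B0) / dx" for j' n'
  have v_affine: "v = (\<lambda>j' n'. (A0 - B0 * w) / dx + B0 / dx * (of_int j' * dx - a * (real n' * dt)))"
    using dx by (auto simp: v_def fun_eq_iff field_simps)
  have "scheme_op r p ac k alpha beta lam v j n = 0"
    unfolding v_affine by (rule scheme_op_affine_eq_0[OF A1 A2 dt_eq])
  then have split: "scheme_op r p ac k alpha beta lam (uapp a lam u0 dt) j n
      = scheme_op r p ac k alpha beta lam (\<lambda>j' n'. uapp a lam u0 dt j' n' - v j' n') j n"
    by (simp add: scheme_op_diff)
  have "\<bar>uapp a lam u0 dt (j + l) (n + \<sigma>) - v (j + l) (n + \<sigma>)\<bar> \<le> dt * T * g"
    if "l \<in> {-int r..int p}" "\<sigma> \<le> k" for l \<sigma>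
  proof -
    define h where "h = of_int l * dx - a * real \<sigma> * dt"
    have h: "\<bar>h\<bar> \<le> dt * T"
      unfolding h_def dx_def T_def using abs_stencil_shift_le[OF assms(1-3) that] .
    have shift: "of_int (j + l) * dx - a * (real (n + \<sigma>) * dt) = w + h"
      by (simp add: w_def h_def n_def dx_def algebra_simps)
    have window: "(\<integral>\<^sup>+x\<in>{w-\<bar>h\<bar>..w+dx+\<bar>h\<bar>}. ennreal \<bar>W x\<bar> \<partial>lborel) \<le> ennreal g"
      unfolding G_eq[symmetric] G_def using h by (intro nn_integral_mono) (auto simp: indicator_def)
    have "\<bar>uapp a lam u0 dt (j + l) (n + \<sigma>) - (A0 + h * B0) / dx\<bar> \<le> \<bar>h\<bar> * g"
      using abs_uapp_sub_affine_le[OF assms(1,2,8) U V shift[unfolded dx_def] g window[unfolded dx_def]]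
      unfolding A0_def B0_def dx_def .
    moreover have "v (j + l) (n + \<sigma>) = (A0 + h * B0) / dx"
      unfolding v_def shift by (simp add: mult.commute)
    ultimately show ?thesis
      using h g by (metis mult_right_mono order_trans)
  qed
  then have "\<bar>scheme_op r p ac k alpha beta lam (uapp a lam u0 dt) j n\<bar> \<le> S * (dt * T * g)"
    unfolding split S_def using assms(1) by (intro abs_scheme_op_le) auto
  then have "ennreal \<bar>eps_err a r p ac k alpha beta lam u0 dt j m\<bar> \<le> ennreal (S * T * g)"
    unfolding eps_err_def n_def[symmetric] using assms(2)
    by (intro ennreal_leI) (simp add: abs_mult divide_le_eq field_simps)
  also have "\<dots> = ennreal (S * T) * G"
    using S T g by (simp add: G_eq ennreal_mult)
  finally show ?thesis by (simp add: G_def dx_def S_def)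
qed

lemma eps_err_sq_le:
  fixes V W :: "real \<Rightarrow> real" and j :: int and m :: nat
  assumes "lam > 0" "dt > 0" "a \<ge> 0"
    and A1: "(\<Sum>l\<in>{-int r..int p}. ac l) = 0" "(\<Sum>l\<in>{-int r..int p}. real_of_int l * ac l) = a"
    and A2: "(\<Sum>\<sigma>\<in>{0..k}. alpha \<sigma>) = 0" "(\<Sum>\<sigma>\<in>{0..k}. real \<sigma> * alpha \<sigma>) = (\<Sum>\<sigma><k. beta \<sigma>)"
    and [measurable]: "u0 \<in> borel_measurable borel" "W \<in> borel_measurable borel"
    and U: "ac_deriv u0 V" and V: "ac_deriv V W"
  defines "S \<equiv> scheme_coeff_norm r p ac k alpha beta lam"
    and "T \<equiv> (real r + real p) / lam + a * real k"
    and "w \<equiv> of_int j * (dt/lam) - a * (real (m - k) * dt)"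
  shows "ennreal (dt / lam * (eps_err a r p ac k alpha beta lam u0 dt j m)\<^sup>2)
    \<le> ennreal (dt / lam * (S * T)\<^sup>2 * (dt/lam + 2 * dt * T))
      * (\<integral>\<^sup>+x\<in>{w - dt*T .. w + dt/lam + dt*T}. ennreal ((W x)\<^sup>2) \<partial>lborel)"
proof -
  define e where "e = eps_err a r p ac k alpha beta lam u0 dt j m"
  define L where "L = dt/lam + 2 * dt * T"
  define G where "G = (\<integral>\<^sup>+x\<in>{w - dt*T .. w + dt/lam + dt*T}. ennreal \<bar>W x\<bar> \<partial>lborel)"
  have T: "T \<ge> 0" and S: "S \<ge> 0" and L: "L \<ge> 0"
    using assms(1-3) by (simp_all add: T_def S_def L_def scheme_coeff_norm_nonneg)
  have e: "ennreal \<bar>e\<bar> \<le> ennreal (S * T) * G"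
    unfolding e_def S_def T_def G_def w_def using abs_eps_err_le[OF assms(1-3) A1 A2 _ U V] by simp
  have CS: "G\<^sup>2 \<le> ennreal L * (\<integral>\<^sup>+x\<in>{w - dt*T .. w + dt/lam + dt*T}. ennreal ((W x)\<^sup>2) \<partial>lborel)"
    unfolding G_def using Cauchy_Schwarz_nn_integral_Icc[of W "w - dt*T" "w + dt/lam + dt*T"] L
    by (simp add: L_def algebra_simps)
  have "ennreal (dt / lam * e\<^sup>2) = ennreal (dt / lam) * (ennreal \<bar>e\<bar>)\<^sup>2"
    using assms(1,2) by (simp add: ennreal_mult[symmetric] ennreal_power power2_abs del: ennreal_mult)
  also have "\<dots> \<le> ennreal (dt / lam) * (ennreal (S * T) * G)\<^sup>2"
    by (intro mult_left_mono power_mono e) auto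
  also have "\<dots> = ennreal (dt / lam * (S * T)\<^sup>2) * G\<^sup>2"
  proof -
    have "(ennreal (S * T) * G)\<^sup>2 = ennreal ((S * T)\<^sup>2) * G\<^sup>2"
      using S T by (simp add: power_mult_distrib ennreal_power)
    moreover have "ennreal (dt / lam * (S * T)\<^sup>2) = ennreal (dt / lam) * ennreal ((S * T)\<^sup>2)"
      by (rule ennreal_mult'') simp
    ultimately show ?thesis by (simp only: mult.assoc)
  qed
  also have "\<dots> \<le> ennreal (dt / lam * (S * T)\<^sup>2) * (ennreal L * (\<integral>\<^sup>+x\<in>{w - dt*T .. w + dt/lam + dt*T}. ennreal ((W x)\<^sup>2) \<partial>lborel))"
    by (intro mult_left_mono CS) auto
  also have "\<dots> = ennreal (dt / lam * (S * T)\<^sup>2 * L) * (\<integral>\<^sup>+x\<in>{w - dt*T .. w + dt/lam + dt*T}. ennreal ((W x)\<^sup>2) \<partial>lborel)"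
    by (subst ennreal_mult''[OF L]) (simp add: mult.assoc)
  finally show ?thesis by (simp add: e_def L_def)
qed

lemma eps_err_l2_le:
  fixes V W :: "real \<Rightarrow> real" and J :: "int set" and m :: nat
  assumes "lam > 0" "dt > 0" "a \<ge> 0"
    and A1: "(\<Sum>l\<in>{-int r..int p}. ac l) = 0" "(\<Sum>l\<in>{-int r..int p}. real_of_int l * ac l) = a"
    and A2: "(\<Sum>\<sigma>\<in>{0..k}. alpha \<sigma>) = 0" "(\<Sum>\<sigma>\<in>{0..k}. real \<sigma> * alpha \<sigma>) = (\<Sum>\<sigma><k. beta \<sigma>)"
    and [measurable]: "u0 \<in> borel_measurable borel" "W \<in> borel_measurable borel"
    and U: "ac_deriv u0 V" and V: "ac_deriv V W"
  defines "S \<equiv> scheme_coeff_norm r p ac k alpha beta lam"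
    and "T \<equiv> (real r + real p) / lam + a * real k"
  shows "(\<Sum>\<^sub>\<infinity> j\<in>J. ennreal (dt / lam * (eps_err a r p ac k alpha beta lam u0 dt j m)\<^sup>2))
    \<le> ennreal ((S * T)\<^sup>2 * (1/lam + 2*T) * real (nat \<lceil>1 + 2 * lam * T\<rceil> + 1) / lam * dt\<^sup>2)
      * (\<integral>\<^sup>+x. ennreal ((W x)\<^sup>2) \<partial>lborel)"
proof (rule infsum_le_finite_sums)
  define dx L c where "dx = dt / lam" and "L = dt/lam + 2 * dt * T" and "c = a * (real (m - k) * dt) + dt * T"
  define I where "I j = {of_int j * dx - c .. of_int j * dx - c + L}" for j :: int
  define K where "K = dt / lam * (S * T)\<^sup>2 * L"
  define M where "M = nat \<lceil>1 + 2 * lam * T\<rceil> + 1"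
  have dx: "dx > 0" and T: "T \<ge> 0" and L: "L \<ge> 0" and K: "K \<ge> 0"
    using assms(1-3) by (simp_all add: dx_def T_def L_def K_def)
  have "L / dx = 1 + 2 * lam * T"
    unfolding L_def dx_def using assms(1,2) by (simp add: field_simps)
  then have M: "M = nat \<lceil>L / dx\<rceil> + 1" by (simp add: M_def)
  have pt: "ennreal (dt / lam * (eps_err a r p ac k alpha beta lam u0 dt j m)\<^sup>2)
      \<le> ennreal K * (\<integral>\<^sup>+x. ennreal ((W x)\<^sup>2) * indicator (I j) x \<partial>lborel)" for j
  proof -
    have "I j = {of_int j * (dt/lam) - a * (real (m - k) * dt) - dt*T
        .. of_int j * (dt/lam) - a * (real (m - k) * dt) + dt/lam + dt*T}"
      unfolding I_def dx_def c_def L_def by (simp add: algebra_simps)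
    then show ?thesis
      using eps_err_sq_le[OF assms(1-3) A1 A2 assms(8,9) U V, of j m]
      by (simp add: K_def L_def S_def T_def)
  qed
  fix F assume F: "finite F" "F \<subseteq> J"
  have "(\<Sum>j\<in>F. ennreal (dt / lam * (eps_err a r p ac k alpha beta lam u0 dt j m)\<^sup>2))
      \<le> ennreal K * (\<Sum>j\<in>F. \<integral>\<^sup>+x. ennreal ((W x)\<^sup>2) * indicator (I j) x \<partial>lborel)"
    unfolding sum_distrib_left by (intro sum_mono pt)
  also have "(\<Sum>j\<in>F. \<integral>\<^sup>+x. ennreal ((W x)\<^sup>2) * indicator (I j) x \<partial>lborel)
      = (\<integral>\<^sup>+x. ennreal ((W x)\<^sup>2) * (\<Sum>j\<in>F. indicator (I j) x) \<partial>lborel)"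
    unfolding sum_distrib_left by (rule nn_integral_sum[symmetric]) (auto simp: I_def)
  also have "\<dots> \<le> (\<integral>\<^sup>+x. ennreal ((W x)\<^sup>2) * of_nat M \<partial>lborel)"
    unfolding M I_def
    by (intro nn_integral_mono mult_left_mono sum_indicator_grid_intervals_le F(1) dx L) simp
  also have "\<dots> = of_nat M * (\<integral>\<^sup>+x. ennreal ((W x)\<^sup>2) \<partial>lborel)"
    by (subst nn_integral_multc) (auto simp: mult.commute)
  finally have "(\<Sum>j\<in>F. ennreal (dt / lam * (eps_err a r p ac k alpha beta lam u0 dt j m)\<^sup>2))
      \<le> ennreal (K * real M) * (\<integral>\<^sup>+x. ennreal ((W x)\<^sup>2) \<partial>lborel)"
    using K by (simp add: mult_left_mono ennreal_mult ennreal_of_nat_eq_real_of_nat mult.assoc)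
  also have "K * real M = (S * T)\<^sup>2 * (1/lam + 2*T) * real (nat \<lceil>1 + 2 * lam * T\<rceil> + 1) / lam * dt\<^sup>2"
    unfolding K_def L_def M_def using assms(1) by (simp add: field_simps power2_eq_square)
  finally show "(\<Sum>j\<in>F. ennreal (dt / lam * (eps_err a r p ac k alpha beta lam u0 dt j m)\<^sup>2))
    \<le> ennreal ((S * T)\<^sup>2 * (1/lam + 2*T) * real (nat \<lceil>1 + 2 * lam * T\<rceil> + 1) / lam * dt\<^sup>2)
      * (\<integral>\<^sup>+x. ennreal ((W x)\<^sup>2) \<partial>lborel)" .
qed (rule nonneg_summable_on_complete, simp)

lemma abs_le_nn_integral_of_ac_deriv:
  assumes U: "ac_deriv U V" and U_neg: "\<And>x. x \<le> 0 \<Longrightarrow> U x = 0" and "x \<le> R"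
  shows "ennreal \<bar>U x\<bar> \<le> (\<integral>\<^sup>+y\<in>{0..R}. ennreal \<bar>V y\<bar> \<partial>lborel)"
proof (cases "x \<le> 0")
  case False
  have "U x = (LBINT y:{0..x}. V y)"
    using ac_derivD(2)[OF U, of 0 x] U_neg[of 0] False by simp
  then have "ennreal \<bar>U x\<bar> \<le> (\<integral>\<^sup>+y\<in>{0..x}. ennreal \<bar>V y\<bar> \<partial>lborel)"
    using ennreal_abs_set_integral_le[OF ac_derivD(1)[OF U]] by simp
  also have "\<dots> \<le> (\<integral>\<^sup>+y\<in>{0..R}. ennreal \<bar>V y\<bar> \<partial>lborel)"
    using \<open>x \<le> R\<close> by (intro nn_integral_mono) (auto simp: indicator_def)
  finally show ?thesis .
qed (simp add: U_neg)

lemma uapp_eq_0_of_vanishing_left: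
  assumes "lam > 0" "dt > 0" "a > 0" and u0_neg: "\<And>x. x \<le> 0 \<Longrightarrow> u0 x = 0"
    and "of_int j + 1 \<le> real r" and "real r / (lam * a) \<le> real n"
  shows "uapp a lam u0 dt j n = 0"
proof (rule uapp_eq_0_of_vanishing)
  fix t assume t: "t \<in> {0..dt/lam}"
  have "real r \<le> real n * (lam * a)"
    using assms(1,3,6) by (simp add: pos_divide_le_eq)
  then have "real r * (dt / lam) \<le> real n * (lam * a) * (dt / lam)"
    using assms(1,2) by (intro mult_right_mono) auto
  also have "\<dots> = a * (real n * dt)"
    using assms(1) by simp
  finally have "real r * (dt / lam) \<le> a * (real n * dt)" .
  moreover have "(of_int j + 1) * (dt / lam) \<le> real r * (dt / lam)"
    using assms(1,2,5) by (intro mult_right_mono) auto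
  ultimately show "u0 (of_int j * (dt/lam) - a * (real n * dt) + t) = 0"
    using t by (intro u0_neg) (simp add: algebra_simps)
qed

lemma uapp_sq_le_of_vanishing_left:
  assumes "lam > 0" "dt > 0" "a \<ge> 0"
    and [measurable]: "u0 \<in> borel_measurable borel" "V \<in> borel_measurable borel"
    and U: "ac_deriv u0 V" and u0_neg: "\<And>x. x \<le> 0 \<Longrightarrow> u0 x = 0"
    and "of_int j + 1 \<le> real r"
  shows "ennreal ((uapp a lam u0 dt j n)\<^sup>2) \<le> ennreal (real r * (dt/lam)) * (\<integral>\<^sup>+x. ennreal ((V x)\<^sup>2) \<partial>lborel)"
proof -
  define R where "R = real r * (dt/lam)"
  have R: "R \<ge> 0" using assms(1,2) by (simp add: R_def)
  define H where "H = (\<integral>\<^sup>+y\<in>{0..R}. ennreal \<bar>V y\<bar> \<partial>lborel)"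
  define h where "h = enn2real H"
  have H_eq: "H = ennreal h" and h: "h \<ge> 0"
    using set_nn_integral_abs_neq_top[OF ac_derivD(1)[OF U]] by (auto simp: H_def h_def ennreal_enn2real_if)
  have "\<bar>uapp a lam u0 dt j n\<bar> \<le> h"
  proof (rule abs_uapp_le[OF assms(1,2)])
    show "set_integrable lborel {0..dt/lam} (\<lambda>t. u0 (of_int j * (dt/lam) - a * (real n * dt) + t))"
      by (intro set_integrable_Icc_translate set_integrable_Icc_of_ac_deriv[OF _ U]) simp
    fix t assume t: "t \<in> {0..dt/lam}"
    have "(of_int j + 1) * (dt / lam) \<le> R"
      unfolding R_def using assms(1,2,8) by (intro mult_right_mono) auto
    moreover have "0 \<le> a * (real n * dt)" using assms(2,3) by simp
    moreover have "(of_int j + 1) * (dt / lam) = of_int j * (dt / lam) + dt / lam"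
      by (simp only: distrib_right mult.left_neutral)
    moreover have "t \<le> dt / lam" using t by simp
    ultimately have arg: "of_int j * (dt/lam) - a * (real n * dt) + t \<le> R"
      by linarith
    have "ennreal \<bar>u0 (of_int j * (dt/lam) - a * (real n * dt) + t)\<bar> \<le> H"
      unfolding H_def by (rule abs_le_nn_integral_of_ac_deriv[OF U u0_neg arg])
    then show "\<bar>u0 (of_int j * (dt/lam) - a * (real n * dt) + t)\<bar> \<le> h"
      using h by (simp add: H_eq)
  qed
  then have "(uapp a lam u0 dt j n)\<^sup>2 \<le> h\<^sup>2"
    using power_mono[OF _ abs_ge_zero, of _ h 2] by simp
  then have "ennreal ((uapp a lam u0 dt j n)\<^sup>2) \<le> H\<^sup>2"
    using h by (simp add: H_eq ennreal_power ennreal_leI)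
  also have "\<dots> \<le> ennreal R * (\<integral>\<^sup>+x\<in>{0..R}. ennreal ((V x)\<^sup>2) \<partial>lborel)"
    unfolding H_def using Cauchy_Schwarz_nn_integral_Icc[of V 0 R] R by simp
  also have "\<dots> \<le> ennreal R * (\<integral>\<^sup>+x. ennreal ((V x)\<^sup>2) \<partial>lborel)"
    by (intro mult_left_mono nn_integral_mono) (auto simp: indicator_def)
  finally show ?thesis by (simp add: R_def)
qed

lemma infsum_le_of_vanishing_beyond:
  fixes f :: "nat \<Rightarrow> ennreal"
  assumes "\<And>n. n \<in> N \<Longrightarrow> f n \<le> B" and "\<And>n. n \<in> N \<Longrightarrow> N0 \<le> n \<Longrightarrow> f n = 0"
  shows "(\<Sum>\<^sub>\<infinity> n\<in>N. f n) \<le> of_nat N0 * B"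
proof (rule infsum_le_finite_sums)
  fix F assume F: "finite F" "F \<subseteq> N"
  have "f n = 0" if "n \<in> F - F \<inter> {..<N0}" for n
    using that F assms(2)[of n] by auto
  then have "sum f F = sum f (F \<inter> {..<N0})"
    using F by (intro sum.mono_neutral_right) auto
  also have "\<dots> \<le> (\<Sum>n\<in>F \<inter> {..<N0}. B)"
    using F assms(1) by (intro sum_mono) auto
  also have "\<dots> \<le> (\<Sum>n<N0. B)"
    by (intro sum_mono2) auto
  finally show "sum f F \<le> of_nat N0 * B" by simp
qed (rule nonneg_summable_on_complete, simp)

lemma boundary_uapp_l2_le:
  fixes N :: "nat set"
  assumes "lam > 0" "dt > 0" "a > 0"
    and [measurable]: "u0 \<in> borel_measurable borel" "V \<in> borel_measurable borel"
    and U: "ac_deriv u0 V" and u0_neg: "\<And>x. x \<le> 0 \<Longrightarrow> u0 x = 0"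
  shows "(\<Sum>\<^sub>\<infinity> n\<in>N. \<Sum>j\<in>{0..<int r}. ennreal (dt * (uapp a lam u0 dt j n)\<^sup>2))
    \<le> ennreal (real (nat \<lceil>real r / (lam * a)\<rceil>) * real r * real r / lam * dt\<^sup>2)
      * (\<integral>\<^sup>+x. ennreal ((V x)\<^sup>2) \<partial>lborel)"
proof -
  define N0 where "N0 = nat \<lceil>real r / (lam * a)\<rceil>"
  define B where "B = ennreal dt * ennreal (real r * (dt/lam)) * (\<integral>\<^sup>+x. ennreal ((V x)\<^sup>2) \<partial>lborel)"
  have "(\<Sum>\<^sub>\<infinity> n\<in>N. \<Sum>j\<in>{0..<int r}. ennreal (dt * (uapp a lam u0 dt j n)\<^sup>2)) \<le> of_nat N0 * (of_nat r * B)"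
  proof (rule infsum_le_of_vanishing_beyond)
    fix n
    have "ennreal (dt * (uapp a lam u0 dt j n)\<^sup>2) \<le> B" if "j \<in> {0..<int r}" for j
    proof -
      have "ennreal (dt * (uapp a lam u0 dt j n)\<^sup>2) = ennreal dt * ennreal ((uapp a lam u0 dt j n)\<^sup>2)"
        using assms(2) by (simp add: ennreal_mult)
      also have "\<dots> \<le> B"
        unfolding B_def mult.assoc using that assms(3)
        by (intro mult_left_mono uapp_sq_le_of_vanishing_left[OF assms(1,2) _ _ _ U u0_neg]) auto
      finally show ?thesis .
    qed
    then show "(\<Sum>j\<in>{0..<int r}. ennreal (dt * (uapp a lam u0 dt j n)\<^sup>2)) \<le> of_nat r * B"
      using sum_mono[of "{0..<int r}" _ "\<lambda>_. B"] by simp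
    assume "N0 \<le> n"
    moreover have "real r / (lam * a) \<le> real N0"
      unfolding N0_def by (rule real_nat_ceiling_ge)
    ultimately have "real r / (lam * a) \<le> real n" by simp
    then have "uapp a lam u0 dt j n = 0" if "j \<in> {0..<int r}" for j
      using uapp_eq_0_of_vanishing_left[of lam dt a u0 j r n, OF assms(1-3) u0_neg] that by simp
    then show "(\<Sum>j\<in>{0..<int r}. ennreal (dt * (uapp a lam u0 dt j n)\<^sup>2)) = 0"
      by simp
  qed
  also have "of_nat N0 * (of_nat r * B) = ennreal (real N0 * real r * real r / lam * dt\<^sup>2) * (\<integral>\<^sup>+x. ennreal ((V x)\<^sup>2) \<partial>lborel)"
  proof -
    have "real N0 * real r * real r / lam * dt\<^sup>2 = real N0 * real r * dt * (real r * (dt/lam))"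
      by (simp add: power2_eq_square)
    then have "ennreal (real N0 * real r * real r / lam * dt\<^sup>2)
        = of_nat N0 * of_nat r * ennreal dt * ennreal (real r * (dt/lam))"
      using assms(2) by (simp only: ennreal_mult' ennreal_of_nat_eq_real_of_nat of_nat_0_le_iff
          mult_nonneg_nonneg less_imp_le)
    then show ?thesis by (simp add: B_def mult.assoc)
  qed
  finally show ?thesis by (simp add: N0_def)
qed

lemma consistency_error_estimate:
  fixes N :: "nat set" and J :: "int set"
  assumes "lam > 0" "a \<ge> 0"
    and A1: "(\<Sum>l\<in>{-int r..int p}. ac l) = 0" "(\<Sum>l\<in>{-int r..int p}. real_of_int l * ac l) = a"
    and A2: "(\<Sum>\<sigma>\<in>{0..k}. alpha \<sigma>) = 0" "(\<Sum>\<sigma>\<in>{0..k}. real \<sigma> * alpha \<sigma>) = (\<Sum>\<sigma><k. beta \<sigma>)"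
  obtains C where "C \<ge> 0"
    and "\<And>u0 u1 u2 dt. H2_zero u0 u1 u2 \<Longrightarrow> 0 < dt \<Longrightarrow>
      (SUP n\<in>N. \<Sum>\<^sub>\<infinity> j\<in>J. ennreal (dt / lam * (eps_err a r p ac k alpha beta lam u0 dt j n)\<^sup>2))
        \<le> ennreal (C * dt\<^sup>2) * L2_norm_sq u2"
proof
  define S T where "S = scheme_coeff_norm r p ac k alpha beta lam"
    and "T = (real r + real p) / lam + a * real k"
  define C where "C = (S * T)\<^sup>2 * (1/lam + 2*T) * real (nat \<lceil>1 + 2 * lam * T\<rceil> + 1) / lam"
  have "T \<ge> 0" using assms(1,2) by (simp add: T_def)
  then show "C \<ge> 0"
    unfolding C_def using assms(1)
    by (intro divide_nonneg_pos mult_nonneg_nonneg add_nonneg_nonneg of_nat_0_le_iff zero_le_power2; simp)+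
  fix u0 u1 u2 and dt :: real
  assume "H2_zero u0 u1 u2" "0 < dt"
  then obtain V W where [measurable]: "u0 \<in> borel_measurable borel" "W \<in> borel_measurable borel"
    and U: "ac_deriv u0 V" and V: "ac_deriv V W"
    and W_sq: "(\<integral>\<^sup>+x. ennreal ((W x)\<^sup>2) \<partial>lborel) = L2_norm_sq u2"
    by (metis H2_zero_ac_deriv_extension)
  show "(SUP n\<in>N. \<Sum>\<^sub>\<infinity> j\<in>J. ennreal (dt / lam * (eps_err a r p ac k alpha beta lam u0 dt j n)\<^sup>2))
    \<le> ennreal (C * dt\<^sup>2) * L2_norm_sq u2"
    unfolding C_def S_def T_def W_sq[symmetric]
    by (intro SUP_least eps_err_l2_le[OF assms(1) \<open>0 < dt\<close> assms(2) A1 A2 _ _ U V]) simp_all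
qed

lemma boundary_layer_estimate:
  fixes N :: "nat set"
  assumes "lam > 0" "a > 0"
  obtains C where "C \<ge> 0"
    and "\<And>u0 u1 u2 dt. H2_zero u0 u1 u2 \<Longrightarrow> 0 < dt \<Longrightarrow>
      (\<Sum>\<^sub>\<infinity> n\<in>N. \<Sum>j\<in>{0..<int r}. ennreal (dt * (uapp a lam u0 dt j n)\<^sup>2))
        \<le> ennreal (C * dt\<^sup>2) * L2_norm_sq u1"
proof
  define C where "C = real (nat \<lceil>real r / (lam * a)\<rceil>) * real r * real r / lam"
  show "C \<ge> 0"
    unfolding C_def using assms(1) by (intro divide_nonneg_pos mult_nonneg_nonneg of_nat_0_le_iff)
  fix u0 u1 u2 and dt :: real
  assume "H2_zero u0 u1 u2" "0 < dt"
  then obtain V where [measurable]: "u0 \<in> borel_measurable borel" "V \<in> borel_measurable borel"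
    and U: "ac_deriv u0 V" and u0_neg: "\<And>x. x \<le> 0 \<Longrightarrow> u0 x = 0"
    and V_sq: "(\<integral>\<^sup>+x. ennreal ((V x)\<^sup>2) \<partial>lborel) = L2_norm_sq u1"
    by (metis H2_zero_ac_deriv_extension)
  show "(\<Sum>\<^sub>\<infinity> n\<in>N. \<Sum>j\<in>{0..<int r}. ennreal (dt * (uapp a lam u0 dt j n)\<^sup>2))
    \<le> ennreal (C * dt\<^sup>2) * L2_norm_sq u1"
    unfolding C_def V_sq[symmetric]
    by (rule boundary_uapp_l2_le[OF assms(1) \<open>0 < dt\<close> assms(2) _ _ U u0_neg]) simp_all
qed

theorem proposition3p1:
  fixes a lam :: real and r p k :: nat and ac :: "int \<Rightarrow> real"
    and alpha beta :: "nat \<Rightarrow> real"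
  assumes a_pos: "a > 0"
    and lam_pos: "lam > 0"
    and ac_r: "ac (- int r) \<noteq> 0" and ac_p: "ac (int p) \<noteq> 0"
    and k_ge: "k \<ge> 1" and alpha_k: "alpha k = 1"
    and alpha_beta0: "\<bar>alpha 0\<bar> + \<bar>beta 0\<bar> > 0"
    and A1: "(\<Sum>l\<in>{-int r..int p}. ac l) = 0" "(\<Sum>l\<in>{-int r..int p}. real_of_int l * ac l) = a"
    and A2: "(\<Sum>\<sigma>\<in>{0..k}. alpha \<sigma>) = 0"
            "(\<Sum>\<sigma>\<in>{0..k}. real \<sigma> * alpha \<sigma>) = (\<Sum>\<sigma><k. beta \<sigma>)"
    and A3: "l2_stable r p ac k alpha beta lam"
    and A4: "\<And>\<theta>. \<theta> \<in> {-pi..pi} - {0} \<Longrightarrow> symbolA r p ac (cis \<theta>) \<noteq> 0"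
  shows "\<exists>C>0. \<forall>u0 u1 u2 dt. H2_zero u0 u1 u2 \<and> 0 < dt \<and> dt \<le> 1 \<longrightarrow>
           (SUP n\<in>{k..}. (\<Sum>\<^sub>\<infinity> j\<in>{int r..}.
               ennreal (dt / lam * (eps_err a r p ac k alpha beta lam u0 dt j n)\<^sup>2)))
             \<le> ennreal (C * dt\<^sup>2) * L2_norm_sq u2
         \<and> (\<Sum>\<^sub>\<infinity> n\<in>{k..}. (\<Sum>j\<in>{0..<int r}.
               ennreal (dt * (uapp a lam u0 dt j n)\<^sup>2)))
             \<le> ennreal (C * dt\<^sup>2) * L2_norm_sq u1"
proof -
  obtain C1 where "C1 \<ge> 0" and consistency: "\<And>u0 u1 u2 dt. H2_zero u0 u1 u2 \<Longrightarrow> 0 < dt \<Longrightarrow>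
      (SUP n\<in>{k..}. \<Sum>\<^sub>\<infinity> j\<in>{int r..}. ennreal (dt / lam * (eps_err a r p ac k alpha beta lam u0 dt j n)\<^sup>2))
        \<le> ennreal (C1 * dt\<^sup>2) * L2_norm_sq u2"
    using consistency_error_estimate[OF lam_pos less_imp_le[OF a_pos] A1 A2] by blast
  obtain C2 where "C2 \<ge> 0" and boundary: "\<And>u0 u1 u2 dt. H2_zero u0 u1 u2 \<Longrightarrow> 0 < dt \<Longrightarrow>
      (\<Sum>\<^sub>\<infinity> n\<in>{k..}. \<Sum>j\<in>{0..<int r}. ennreal (dt * (uapp a lam u0 dt j n)\<^sup>2))
        \<le> ennreal (C2 * dt\<^sup>2) * L2_norm_sq u1"
    using boundary_layer_estimate[OF lam_pos a_pos] by blast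
  have enlarge: "ennreal (C * dt\<^sup>2) * X \<le> ennreal ((C1 + C2 + 1) * dt\<^sup>2) * X"
    if "C \<le> C1 + C2 + 1" for C dt X
    using that by (intro mult_right_mono ennreal_leI) auto
  show ?thesis
  proof (intro exI[of _ "C1 + C2 + 1"] conjI allI impI)
    fix u0 u1 u2 and dt :: real
    assume "H2_zero u0 u1 u2 \<and> 0 < dt \<and> dt \<le> 1"
    then have H: "H2_zero u0 u1 u2" and dt: "0 < dt" by auto
    show "(SUP n\<in>{k..}. \<Sum>\<^sub>\<infinity> j\<in>{int r..}. ennreal (dt / lam * (eps_err a r p ac k alpha beta lam u0 dt j n)\<^sup>2))
        \<le> ennreal ((C1 + C2 + 1) * dt\<^sup>2) * L2_norm_sq u2"
      using order_trans[OF consistency[OF H dt] enlarge[of C1]] \<open>C2 \<ge> 0\<close> by simp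
    show "(\<Sum>\<^sub>\<infinity> n\<in>{k..}. \<Sum>j\<in>{0..<int r}. ennreal (dt * (uapp a lam u0 dt j n)\<^sup>2))
        \<le> ennreal ((C1 + C2 + 1) * dt\<^sup>2) * L2_norm_sq u1"
      using order_trans[OF boundary[OF H dt] enlarge[of C2]] \<open>C1 \<ge> 0\<close> by simp
  qed (use \<open>C1 \<ge> 0\<close> \<open>C2 \<ge> 0\<close> in simp)
qed

end
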